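(* Let $G$ be a simple connected graph with $n$ vertices and $m$ edges, let $k\ge1$ and $r\ge1$ be integers, and let $S_{2k}^r(G)$ be the $r$-th iterated $2k$-parallel subdivision graph of $G$. Write $E'_{r-1}$ and $V'_{r-1}$ for the edge and vertex sets of $S_{2k}^{r-1}(G)$ and $\Gamma(S_{2k}^{r-1}(G))$ for the multiset of normalized Laplacian eigenvalues of $S_{2k}^{r-1}(G)$. Then the multiset of normalized Laplacian eigenvalues of $S_{2k}^r(G)$ is $$g_1(\Gamma(S_{2k}^{r-1}(G))\setminus\{0,2\})\cup g_2(\Gamma(S_{2k}^{r-1}(G))\setminus\{0,2\})\cup g_3(\Gamma(S_{2k}^{r-1}(G))\setminus\{0,2\})\cup\{0,2\}\cup\{\tfrac12\}^{(k|E'_{r-1}|-|V'_{r-1}|+2)}\cup\{\tfrac32\}^{(k|E'_{r-1}|-|V'_{r-1}|+2)}$$ if $G$ is bipartite, and $$g_1(\Gamma(S_{2k}^{r-1}(G))\setminus\{0\})\cup g_2(\Gamma(S_{2k}^{r-1}(G))\setminus\{0\})\cup g_3(\Gamma(S_{2k}^{r-1}(G))\setminus\{0\})\cup\{0\}\cup\{\tfrac12\}^{(k|E'_{r-1}|-|V'_{r-1}|)}\cup\{\tfrac32\}^{(k|E'_{r-1}|-|V'_{r-1}|+2)}$$ if $G$ is non-bipartite, where $\{x\}^{(c)}$ denotes the multiset consisting of $x$ repeated $c$ times and all unions are multiset unions.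
   Context: The normalized Laplacian of a graph $H$ without isolated vertices is $I-D(H)^{-1/2}A(H)D(H)^{-1/2}$. The $2k$-parallel subdivision graph $S_{2k}(H)$ is obtained from $H$ by replacing each edge $uv$ by $k$ internally disjoint paths $u-w_1-w_2-v$ of length $3$ (each with its own two new internal vertices). Iterates: $S_{2k}^0(G)=G$, $S_{2k}^r(G)=S_{2k}(S_{2k}^{r-1}(G))$. For a real number $x$, let $g_1(x),g_2(x),g_3(x)$ denote the three roots of $4\zeta^3-12\zeta^2+9\zeta-x=0$; for a multiset $U$ of reals, $g_l(U)$ is the multiset $\bigcup_{x\in U}\{g_l(x)\}$ ($l=1,2,3$). In $\Gamma\setminus\{0,2\}$ (resp. $\Gamma\setminus\{0\}$) one copy of each listed value is removed. *)

theory Defs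
  imports Complex_Main "HOL-Library.Multiset" "HOL-Computational_Algebra.Polynomial"
    "Jordan_Normal_Form.Char_Poly"
begin

type_synonym 'v graph = "'v set \<times> 'v set set"

definition simple_graph :: "'v graph \<Rightarrow> bool" where
  "simple_graph G \<longleftrightarrow> finite (fst G) \<and> (\<forall>e\<in>snd G. e \<subseteq> fst G \<and> card e = 2)"

definition connected_graph :: "'v graph \<Rightarrow> bool" where
  "connected_graph G \<longleftrightarrow> fst G \<noteq> {} \<and>
     (\<forall>u\<in>fst G. \<forall>v\<in>fst G. (u, v) \<in> {(x, y). {x, y} \<in> snd G}\<^sup>*)"

definition bipartite_graph :: "'v graph \<Rightarrow> bool" where
  "bipartite_graph G \<longleftrightarrow> (\<exists>A. \<forall>e\<in>snd G. card (e \<inter> A) = 1)"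

definition degree :: "'v graph \<Rightarrow> 'v \<Rightarrow> nat" where
  "degree G v = card {e \<in> snd G. v \<in> e}"

text \<open>Vertices of iterated subdivisions: original vertices, and subdivision vertices.
  \<open>Mid u v i\<close> is the internal vertex adjacent to \<open>u\<close> on the \<open>i\<close>-th path replacing edge uv;
  the path is u - Mid u v i - Mid v u i - v.\<close>
datatype 'a svert = Base 'a | Mid "'a svert" "'a svert" nat

definition lift_graph :: "'a graph \<Rightarrow> 'a svert graph" where
  "lift_graph G = (Base ` fst G, (\<lambda>e. Base ` e) ` snd G)"

definition S2k :: "nat \<Rightarrow> 'a svert graph \<Rightarrow> 'a svert graph" where
  "S2k k G = (fst G \<union> {Mid u v i | u v i. {u, v} \<in> snd G \<and> i < k},
              {{u, Mid u v i} | u v i. {u, v} \<in> snd G \<and> i < k}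
              \<union> {{Mid u v i, Mid v u i} | u v i. {u, v} \<in> snd G \<and> i < k})"

text \<open>An enumeration of a finite vertex set (the spectrum does not depend on the choice).\<close>
definition vlist :: "'v set \<Rightarrow> 'v list" where
  "vlist V = (SOME xs. distinct xs \<and> set xs = V)"

text \<open>Normalized Laplacian I - D^(-1/2) A D^(-1/2) (graph without isolated vertices).\<close>
definition nlap_mat :: "'v graph \<Rightarrow> real mat" where
  "nlap_mat G = (let xs = vlist (fst G); n = length xs in
     mat n n (\<lambda>(i, j). if i = j then 1
        else if {xs ! i, xs ! j} \<in> snd G
             then - 1 / sqrt (real (degree G (xs ! i)) * real (degree G (xs ! j)))
             else 0))"

text \<open>Multiset of normalized Laplacian eigenvalues (roots of the characteristic polynomial,
  with multiplicity; the matrix is real symmetric so all eigenvalues are real).\<close>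
definition nlap_spec :: "'v graph \<Rightarrow> real multiset" where
  "nlap_spec G = proots (char_poly (nlap_mat G))"

definition gcubic :: "real \<Rightarrow> real poly" where
  "gcubic x = [: -x, 9, -12, 4 :]"

text \<open>g_1(U) \<union> g_2(U) \<union> g_3(U): all three roots (with multiplicity) of the cubic for each x in U.\<close>
definition g_all :: "real multiset \<Rightarrow> real multiset" where
  "g_all U = sum_mset (image_mset (\<lambda>x. proots (gcubic x)) U)"

end

theory Submission
  imports Defs
begin

text \<open>Order the vertices of \<open>S = S\<^sub>2\<^sub>k(H)\<close> as the old vertices \<open>V\<close> followed by the \<open>2k|E|\<close> new
  ones. The new-new block of \<open>z I - L(S)\<close> splits into the \<open>2 \<times> 2\<close> blocks \<open>[[z-1, 1/2], [1/2, z-1]]\<close>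
  of the twin vertices \<open>Mid u v i\<close>, \<open>Mid v u i\<close>, each of determinant \<open>q(z) = (z-1)\<^sup>2 - 1/4\<close>, and the
  Schur complement of this block is \<open>(f(z) I - L(H)) / (4 q(z))\<close> with
  \<open>f(z) = 4z\<^sup>3 - 12z\<^sup>2 + 9z\<close>.
  Hence \<open>\<chi>\<^sub>S(z) (4 q(z))\<^bsup>|V|\<^esup> = q(z)\<^bsup>k|E|\<^esup> \<chi>\<^sub>H(f(z))\<close>, and comparing roots gives
  \<open>\<Gamma>(S) + |V| {1/2, 3/2} = k|E| {1/2, 3/2} + g(\<Gamma>(H))\<close>, where \<open>g\<close> collects the three
  preimages under \<open>f\<close>. The eigenvalue \<open>0\<close> of \<open>H\<close>, and \<open>2\<close> if \<open>H\<close> is bipartite, contribute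
  \<open>g(0) = {0, 3/2, 3/2}\<close> and \<open>g(2) = {2, 1/2, 1/2}\<close>; the remaining copies of \<open>1/2\<close>, \<open>3/2\<close>
  cancel because \<open>|V| \<le> k|E| + 2\<close>, and \<open>|V| \<le> k|E|\<close> if \<open>H\<close> is not bipartite. These bounds hold
  for \<open>G\<close> by counting the edges of a breadth-first spanning tree, and they are inherited by \<open>S\<close>,
  which has \<open>|V| + 2k|E|\<close> vertices and \<open>3k|E|\<close> edges.\<close>

section \<open>Matrices indexed by lists\<close>

definition mat_on :: "'v list \<Rightarrow> 'w list \<Rightarrow> ('v \<Rightarrow> 'w \<Rightarrow> 'b) \<Rightarrow> 'b mat" where
  "mat_on xs ys f = mat (length xs) (length ys) (\<lambda>(i, j). f (xs ! i) (ys ! j))"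

lemma mat_on_carrier [simp]: "mat_on xs ys f \<in> carrier_mat (length xs) (length ys)"
  by (simp add: mat_on_def)

lemma dim_mat_on [simp]:
  "dim_row (mat_on xs ys f) = length xs" "dim_col (mat_on xs ys f) = length ys"
  by (simp_all add: mat_on_def)

lemma index_mat_on [simp]:
  "i < length xs \<Longrightarrow> j < length ys \<Longrightarrow> mat_on xs ys f $$ (i, j) = f (xs ! i) (ys ! j)"
  by (simp add: mat_on_def)

lemma mat_on_cong:
  "(\<And>x y. x \<in> set xs \<Longrightarrow> y \<in> set ys \<Longrightarrow> f x y = g x y) \<Longrightarrow> mat_on xs ys f = mat_on xs ys g"
  by (rule eq_matI) auto

lemma sum_nth_distinct:
  assumes "distinct ys"
  shows "(\<Sum>l<length ys. f (ys ! l)) = (\<Sum>y\<in>set ys. f y)"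
proof -
  have "set ys = (!) ys ` {..<length ys}" by (auto simp: set_conv_nth)
  moreover have "inj_on ((!) ys) {..<length ys}" using assms by (simp add: inj_on_nth)
  ultimately show ?thesis by (simp add: sum.reindex)
qed

lemma mat_on_mult:
  assumes "distinct ys"
  shows "mat_on xs ys f * mat_on ys zs g = mat_on xs zs (\<lambda>x z. \<Sum>y\<in>set ys. f x y * g y z)"
  by (rule eq_matI)
    (auto simp: scalar_prod_def atLeast0LessThan intro!: sum_nth_distinct[OF assms])

lemma mat_on_mult_vec:
  assumes "distinct ys"
  shows "mat_on xs ys f *\<^sub>v vec (length ys) (\<lambda>l. h (ys ! l))
       = vec (length xs) (\<lambda>i. \<Sum>y\<in>set ys. f (xs ! i) y * h y)"
  by (rule eq_vecI)
    (auto simp: scalar_prod_def atLeast0LessThan intro!: sum_nth_distinct[OF assms])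

lemma mat_on_append:
  "mat_on (xs @ ys) (xs @ ys) f
   = four_block_mat (mat_on xs xs f) (mat_on xs ys f) (mat_on ys xs f) (mat_on ys ys f)"
  by (rule eq_matI) (auto simp: mat_on_def nth_append)

lemma mat_on_map_right: "mat_on xs (map t ys) f = mat_on xs ys (\<lambda>x y. f x (t y))"
  by (rule eq_matI) auto

lemma mat_on_map_left: "mat_on (map t xs) ys f = mat_on xs ys (\<lambda>x y. f (t x) y)"
  by (rule eq_matI) auto

lemma mat_on_minus: "mat_on xs ys f - mat_on xs ys g = mat_on xs ys (\<lambda>x y. f x y - g x y)"
  by (rule eq_matI) auto

lemma mat_on_smult: "c \<cdot>\<^sub>m mat_on xs ys f = mat_on xs ys (\<lambda>x y. c * f x y)"
  by (rule eq_matI) auto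

lemma mat_on_diagonal:
  fixes c :: "'a :: comm_ring_1"
  assumes "distinct xs" and "\<And>x y. x \<in> set xs \<Longrightarrow> y \<in> set xs \<Longrightarrow> f x y = (if x = y then c else 0)"
  shows "mat_on xs xs f = c \<cdot>\<^sub>m 1\<^sub>m (length xs)"
  by (rule eq_matI) (use assms in \<open>auto simp: nth_eq_iff_index_eq\<close>)

lemma det_mat_on_reorder:
  fixes f :: "'v \<Rightarrow> 'v \<Rightarrow> 'a :: comm_ring_1"
  assumes "distinct xs" and "distinct ys" and "set xs = set ys"
  shows "det (mat_on xs xs f) = det (mat_on ys ys f)"
proof -
  have len: "length xs = length ys" using assms distinct_card by metis
  let ?\<delta> = "\<lambda>x y. of_bool (x = y) :: 'a"
  define P where "P = mat_on xs ys ?\<delta>"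
  define Q where "Q = mat_on ys xs ?\<delta>"
  have P: "P \<in> carrier_mat (length xs) (length xs)" and Q: "Q \<in> carrier_mat (length xs) (length xs)"
    and F: "mat_on ys ys f \<in> carrier_mat (length xs) (length xs)"
    unfolding P_def Q_def using len by (metis mat_on_carrier)+
  have "P * Q = mat_on xs xs ?\<delta>"
    unfolding P_def Q_def mat_on_mult[OF assms(2)]
    by (rule mat_on_cong) (use assms(3) in auto)
  also have "\<dots> = 1\<^sub>m (length xs)"
    by (rule eq_matI) (use assms(1) in \<open>auto simp: nth_eq_iff_index_eq\<close>)
  finally have "det P * det Q = 1" using det_mult[OF P Q] by simp
  have "P * mat_on ys ys f * Q = mat_on xs xs f"
    unfolding P_def Q_def mat_on_mult[OF assms(2)]
    by (rule mat_on_cong) (use assms(3) in auto)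
  then have "det (mat_on xs xs f) = det P * det (mat_on ys ys f) * det Q"
    using det_mult[OF mult_carrier_mat[OF P F] Q] det_mult[OF P F] by simp
  with \<open>det P * det Q = 1\<close> show ?thesis by (metis mult.assoc mult.commute mult_1)
qed

lemma det_four_block_mat_schur:
  fixes A :: "'a :: idom mat"
  assumes A: "A \<in> carrier_mat n n" and B: "B \<in> carrier_mat n m" and C: "C \<in> carrier_mat m n"
    and D: "D \<in> carrier_mat m m" and Y: "Y \<in> carrier_mat m n" and DY: "D * Y = C"
  shows "det (four_block_mat A B C D) = det (A - B * Y) * det D"
proof -
  define Q where "Q = four_block_mat (1\<^sub>m n) (0\<^sub>m n m) (- Y) (1\<^sub>m m)"
  have Q: "Q \<in> carrier_mat (n + m) (n + m)" unfolding Q_def using Y by auto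
  have M: "four_block_mat A B C D \<in> carrier_mat (n + m) (n + m)" using A B C D by auto
  have "det Q = 1" unfolding Q_def
    by (subst det_four_block_mat_upper_right_zero[of _ n _ m]) (use Y in auto)
  have "C * 1\<^sub>m n + D * (- Y) = 0\<^sub>m m n"
    using C D Y DY uminus_mult_right_mat[of D Y] by (auto intro!: eq_matI)
  then have "four_block_mat A B C D * Q = four_block_mat (A - B * Y) B (0\<^sub>m m n) D"
    unfolding Q_def using A B C D Y
    by (subst mult_four_block_mat[OF A B C D]) (auto simp: minus_add_uminus_mat)
  then have "det (four_block_mat A B C D) = det (four_block_mat (A - B * Y) B (0\<^sub>m m n) D)"
    using det_mult[OF M Q] \<open>det Q = 1\<close> by simp
  also have "\<dots> = det (A - B * Y) * det D"
    by (rule det_four_block_mat_lower_left_zero) (use A B Y D in auto)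
  finally show ?thesis .
qed

lemma det_four_block_smult_one:
  fixes a b :: "'a :: idom"
  shows "det (four_block_mat (a \<cdot>\<^sub>m 1\<^sub>m n) (b \<cdot>\<^sub>m 1\<^sub>m n) (b \<cdot>\<^sub>m 1\<^sub>m n) (a \<cdot>\<^sub>m 1\<^sub>m n))
       = (a\<^sup>2 - b\<^sup>2) ^ n"
proof -
  have smult_one_mult: "(c \<cdot>\<^sub>m 1\<^sub>m n) * (d \<cdot>\<^sub>m 1\<^sub>m n) = (c * d) \<cdot>\<^sub>m 1\<^sub>m n" for c d :: 'a
  proof -
    have "(c \<cdot>\<^sub>m 1\<^sub>m n) * (d \<cdot>\<^sub>m 1\<^sub>m n) = c \<cdot>\<^sub>m (1\<^sub>m n * (d \<cdot>\<^sub>m 1\<^sub>m n))"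
      by (rule mult_smult_assoc_mat) auto
    also have "\<dots> = (c * d) \<cdot>\<^sub>m 1\<^sub>m n" by (rule eq_matI) auto
    finally show ?thesis .
  qed
  have "det (four_block_mat (a \<cdot>\<^sub>m 1\<^sub>m n) (b \<cdot>\<^sub>m 1\<^sub>m n) (b \<cdot>\<^sub>m 1\<^sub>m n) (a \<cdot>\<^sub>m 1\<^sub>m n))
      = det ((a * a) \<cdot>\<^sub>m 1\<^sub>m n - (b * b) \<cdot>\<^sub>m 1\<^sub>m n)"
    by (subst det_four_block_mat[of _ n]) (auto simp: smult_one_mult mult.commute)
  also have "(a * a) \<cdot>\<^sub>m 1\<^sub>m n - (b * b) \<cdot>\<^sub>m 1\<^sub>m n = (a\<^sup>2 - b\<^sup>2) \<cdot>\<^sub>m 1\<^sub>m n"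
    by (rule eq_matI) (auto simp: power2_eq_square)
  finally show ?thesis by simp
qed

section \<open>The cubic and quadratic factors\<close>

lemma poly_eqI_cofinite:
  fixes p q :: "'a :: {idom, ring_char_0} poly"
  assumes "finite F" and "\<And>x. x \<notin> F \<Longrightarrow> poly p x = poly q x"
  shows "p = q"
proof (rule ccontr)
  assume "p \<noteq> q"
  then have "finite {x. poly (p - q) x = 0}" by (intro poly_roots_finite) simp
  moreover have "- F \<subseteq> {x. poly (p - q) x = 0}" using assms(2) by auto
  ultimately have "finite (F \<union> - F)" using assms(1) finite_subset by blast
  then show False by (simp add: infinite_UNIV_char_0)
qed

lemma g_all_empty [simp]: "g_all {#} = {#}"
  by (simp add: g_all_def)

lemma g_all_add_mset [simp]: "g_all (add_mset x U) = proots (gcubic x) + g_all U"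
  by (simp add: g_all_def)

lemma g_all_union [simp]: "g_all (U + U') = g_all U + g_all U'"
  by (simp add: g_all_def)

lemma gcubic_nonzero: "gcubic x \<noteq> 0"
  by (simp add: gcubic_def)

text \<open>\<open>gcubic x = subdivision_cubic - [:x:]\<close>, so \<open>g_all\<close> collects preimages under this cubic.\<close>
definition subdivision_cubic :: "real poly" where
  "subdivision_cubic = [:0, 9, -12, 4:]"

lemma proots_pcompose_subdivision_cubic:
  fixes p :: "real poly"
  assumes "p \<noteq> 0"
  shows "proots (p \<circ>\<^sub>p subdivision_cubic) = g_all (proots p)"
  using assms
proof (induction "Polynomial.degree p" arbitrary: p rule: less_induct)
  case less
  have nonzero: "q \<circ>\<^sub>p subdivision_cubic \<noteq> 0" if "q \<noteq> 0" for q :: "real poly"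
    using that pcompose_eq_0_iff[of subdivision_cubic q] by (simp add: subdivision_cubic_def)
  show ?case
  proof (cases "\<exists>a. poly p a = 0")
    case True
    then obtain a q where pq: "p = [:-a, 1:] * q"
      by (metis dvdE poly_eq_0_iff_dvd)
    with less.prems have "q \<noteq> 0" by auto
    then have "Polynomial.degree q < Polynomial.degree p"
      by (subst pq, subst degree_mult_eq) auto
    with less.hyps \<open>q \<noteq> 0\<close> have IH: "proots (q \<circ>\<^sub>p subdivision_cubic) = g_all (proots q)"
      by blast
    have "p \<circ>\<^sub>p subdivision_cubic = ([:-a, 1:] \<circ>\<^sub>p subdivision_cubic) * (q \<circ>\<^sub>p subdivision_cubic)"
      by (simp only: pq pcompose_mult)
    also have "[:-a, 1:] \<circ>\<^sub>p subdivision_cubic = gcubic a"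
      by (simp add: gcubic_def subdivision_cubic_def pcompose_pCons)
    finally have "p \<circ>\<^sub>p subdivision_cubic = gcubic a * (q \<circ>\<^sub>p subdivision_cubic)" .
    moreover have "proots p = proots [:-a, 1:] + proots q"
      unfolding pq by (rule proots_mult) (use \<open>q \<noteq> 0\<close> in auto)
    ultimately show ?thesis
      using IH nonzero[OF \<open>q \<noteq> 0\<close>] by (simp add: proots_mult gcubic_nonzero)
  next
    case False
    then have "proots p = {#}" and "proots (p \<circ>\<^sub>p subdivision_cubic) = {#}"
      using set_count_proots[OF less.prems] set_count_proots[OF nonzero[OF less.prems]]
      by (auto simp: poly_pcompose)
    then show ?thesis by simp
  qed
qed

lemma proots_three_linear_factors:
  fixes a b d :: real
  shows "proots ([:-a, 1:] * [:-b, 1:] * [:-d, 1:]) = {#a, b, d#}"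
  by (subst proots_mult, simp, simp)+ simp

lemma proots_gcubic_0: "proots (gcubic 0) = {#0, 3/2, 3/2#}"
proof -
  have "gcubic 0 = Polynomial.smult 4 ([:-0, 1:] * [:-(3/2), 1:] * [:-(3/2), 1:])"
    by (simp add: gcubic_def)
  then show ?thesis by (simp only: proots_smult proots_three_linear_factors)
qed

lemma proots_gcubic_2: "proots (gcubic 2) = {#2, 1/2, 1/2#}"
proof -
  have "gcubic 2 = Polynomial.smult 4 ([:-2, 1:] * [:-(1/2), 1:] * [:-(1/2), 1:])"
    by (simp add: gcubic_def)
  then show ?thesis by (simp only: proots_smult proots_three_linear_factors)
qed

definition twin_det :: "real \<Rightarrow> real" where
  "twin_det z = (z - 1)\<^sup>2 - 1/4"

definition subdivision_quadratic :: "real poly" where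
  "subdivision_quadratic = [:3, -8, 4:]"

lemma poly_subdivision_quadratic: "poly subdivision_quadratic z = 4 * twin_det z"
  by (simp add: subdivision_quadratic_def twin_det_def power2_eq_square algebra_simps)

lemma subdivision_quadratic_nonzero: "subdivision_quadratic \<noteq> 0"
  by (simp add: subdivision_quadratic_def)

lemma proots_subdivision_quadratic: "proots subdivision_quadratic = {#1/2, 3/2#}"
proof -
  have "subdivision_quadratic = Polynomial.smult 4 ([:-(1/2), 1:] * [:-(3/2), 1:])"
    by (simp add: subdivision_quadratic_def)
  also have "proots \<dots> = proots [:-(1/2), 1:] + proots [:-(3/2::real), 1:]"
    by (simp only: proots_smult) (rule proots_mult; simp)
  finally show ?thesis by simp
qed

lemma g_all_remove_0:
  "0 \<in># U \<Longrightarrow> g_all U = g_all (U - {#0#}) + {#0, 3/2, 3/2#}"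
  using g_all_add_mset[of 0 "U - {#0#}"] by (simp add: proots_gcubic_0 add.commute)

lemma g_all_remove_0_2:
  assumes "0 \<in># U" and "2 \<in># U"
  shows "g_all U = g_all (U - {#0, 2#}) + {#0, 2, 1/2, 1/2, 3/2, 3/2#}"
proof -
  have "{#0, 2#} \<subseteq># U"
    using assms by (simp add: insert_subset_eq_iff in_diff_count)
  then have "U = (U - {#0, 2#}) + {#0, 2#}"
    by (rule subset_mset.diff_add[symmetric])
  then have "g_all U = g_all (U - {#0, 2#}) + g_all {#0, 2#}"
    by (metis g_all_union)
  then show ?thesis by (simp add: proots_gcubic_0 proots_gcubic_2)
qed

lemma cancel_repeat_mset_pair:
  assumes "S + repeat_mset n {#a, b#} = repeat_mset m {#a, b#} + T + replicate_mset p a + replicate_mset q b"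
    and "n \<le> m + p" and "n \<le> m + q"
  shows "S = T + replicate_mset (m + p - n) a + replicate_mset (m + q - n) b"
proof (rule multiset_eqI)
  fix x
  have "count (S + repeat_mset n {#a, b#}) x
      = count (repeat_mset m {#a, b#} + T + replicate_mset p a + replicate_mset q b) x"
    using assms(1) by simp
  then show "count S x = count (T + replicate_mset (m + p - n) a + replicate_mset (m + q - n) b) x"
    using assms(2,3) by (auto split: if_splits)
qed

section \<open>The normalized Laplacian\<close>

lemma vlist:
  assumes "finite V"
  shows distinct_vlist: "distinct (vlist V)" and set_vlist: "set (vlist V) = V"
proof -
  obtain xs where "distinct xs \<and> set xs = V" using finite_distinct_list[OF assms] by blast
  then have "distinct (vlist V) \<and> set (vlist V) = V" unfolding vlist_def by (rule someI)
  then show "distinct (vlist V)" and "set (vlist V) = V" by blast+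
qed

lemma simple_graph_finite_vertices: "simple_graph G \<Longrightarrow> finite (fst G)"
  by (simp add: simple_graph_def)

lemma simple_graph_finite_edges:
  assumes "simple_graph G"
  shows "finite (snd G)"
proof -
  have "snd G \<subseteq> Pow (fst G)" using assms by (auto simp: simple_graph_def)
  moreover have "finite (fst G)" using assms by (rule simple_graph_finite_vertices)
  ultimately show ?thesis by (meson finite_Pow_iff finite_subset)
qed

lemma simple_graph_edge_vertices:
  "simple_graph G \<Longrightarrow> {x, y} \<in> snd G \<Longrightarrow> x \<in> fst G \<and> y \<in> fst G"
  unfolding simple_graph_def by blast

lemma simple_graph_edge_neq: "simple_graph G \<Longrightarrow> {x, y} \<in> snd G \<Longrightarrow> x \<noteq> y"
  unfolding simple_graph_def by force

lemma card_doubleton_Int_eq_1_iff: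
  "x \<noteq> y \<Longrightarrow> card ({x, y} \<inter> A) = 1 \<longleftrightarrow> (x \<in> A) \<noteq> (y \<in> A)"
  by (cases "x \<in> A"; cases "y \<in> A") auto

lemma degree_pos_if_in_edge:
  assumes "simple_graph G" and "e \<in> snd G" and "x \<in> e"
  shows "degree G x > 0"
proof -
  have "finite {e \<in> snd G. x \<in> e}" using simple_graph_finite_edges[OF assms(1)] by simp
  moreover have "e \<in> {e \<in> snd G. x \<in> e}" using assms(2,3) by simp
  ultimately show ?thesis unfolding degree_def by (auto simp: card_gt_0_iff)
qed

lemma handshake:
  assumes "simple_graph G"
  shows "(\<Sum>x\<in>fst G. degree G x) = 2 * card (snd G)"
proof -
  have V: "finite (fst G)" and E: "finite (snd G)"
    using assms simple_graph_finite_vertices simple_graph_finite_edges by blast+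
  have "(\<Sum>x\<in>fst G. degree G x) = (\<Sum>x\<in>fst G. \<Sum>e\<in>snd G. of_bool (x \<in> e))"
    unfolding degree_def using E by (simp add: Int_def conj_commute)
  also have "\<dots> = (\<Sum>e\<in>snd G. \<Sum>x\<in>fst G. of_bool (x \<in> e))"
    by (rule sum.swap)
  also have "\<dots> = (\<Sum>e\<in>snd G. 2)"
  proof (rule sum.cong)
    fix e assume "e \<in> snd G"
    then have "fst G \<inter> e = e" and "card e = 2" using assms by (auto simp: simple_graph_def)
    then show "(\<Sum>x\<in>fst G. of_bool (x \<in> e)) = (2 :: nat)" using V by (simp add: Int_def)
  qed simp
  finally show ?thesis by simp
qed

definition neighbours :: "'v graph \<Rightarrow> 'v \<Rightarrow> 'v set" where
  "neighbours G x = {y. {x, y} \<in> snd G}"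

lemma neighbours_subset: "simple_graph G \<Longrightarrow> neighbours G x \<subseteq> fst G - {x}"
proof
  fix y assume G: "simple_graph G" and "y \<in> neighbours G x"
  then have "{x, y} \<in> snd G" by (simp add: neighbours_def)
  then show "y \<in> fst G - {x}"
    using simple_graph_edge_vertices[OF G] simple_graph_edge_neq[OF G] by blast
qed

lemma finite_neighbours: "simple_graph G \<Longrightarrow> finite (neighbours G x)"
  by (meson finite_Diff finite_subset neighbours_subset simple_graph_finite_vertices)

lemma degree_eq_card_neighbours:
  assumes "simple_graph G"
  shows "degree G x = card (neighbours G x)"
proof -
  have "bij_betw (\<lambda>y. {x, y}) (neighbours G x) {e \<in> snd G. x \<in> e}"
  proof (rule bij_betwI')
    fix y y' assume "y \<in> neighbours G x" and "y' \<in> neighbours G x"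
    then have "y \<noteq> x" "y' \<noteq> x" using neighbours_subset[OF assms] by auto
    then show "({x, y} = {x, y'}) = (y = y')" by (auto simp: doubleton_eq_iff)
  next
    fix e assume e: "e \<in> {e \<in> snd G. x \<in> e}"
    then have "card e = 2" using assms by (simp add: simple_graph_def)
    then obtain a b where "e = {a, b}" by (meson card_2_iff)
    with e have "e = {x, if x = a then b else a}" by auto
    with e show "\<exists>y\<in>neighbours G x. e = {x, y}" by (auto simp: neighbours_def)
  qed (simp add: neighbours_def)
  then show ?thesis unfolding degree_def by (simp add: bij_betw_same_card)
qed

definition nlap_entry :: "'v graph \<Rightarrow> 'v \<Rightarrow> 'v \<Rightarrow> real" where
  "nlap_entry G x y = (if x = y then 1 else if {x, y} \<in> snd G
      then - 1 / sqrt (real (degree G x) * real (degree G y)) else 0)"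

definition char_entry :: "'v graph \<Rightarrow> real \<Rightarrow> 'v \<Rightarrow> 'v \<Rightarrow> real" where
  "char_entry G z x y = (if x = y then z else 0) - nlap_entry G x y"

lemma nlap_mat_eq_mat_on:
  assumes "finite (fst G)"
  shows "nlap_mat G = mat_on (vlist (fst G)) (vlist (fst G)) (nlap_entry G)"
  unfolding nlap_mat_def Let_def
  by (rule eq_matI)
    (use distinct_vlist[OF assms] in \<open>auto simp: mat_on_def nlap_entry_def nth_eq_iff_index_eq\<close>)

lemma poly_char_poly_nlap_mat:
  assumes "finite (fst G)" and "distinct xs" and "set xs = fst G"
  shows "poly (char_poly (nlap_mat G)) z = det (mat_on xs xs (char_entry G z))"
proof -
  let ?ys = "vlist (fst G)"
  have "poly (char_poly (nlap_mat G)) z = det (- char_matrix (nlap_mat G) z)"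
    by (rule char_poly_matrix[of _ "length ?ys"]) (simp add: nlap_mat_eq_mat_on[OF assms(1)])
  also have "- char_matrix (nlap_mat G) z = mat_on ?ys ?ys (char_entry G z)"
    unfolding nlap_mat_eq_mat_on[OF assms(1)] char_matrix_def
    by (rule eq_matI)
      (use distinct_vlist[OF assms(1)] in \<open>auto simp: char_entry_def nth_eq_iff_index_eq\<close>)
  also have "det \<dots> = det (mat_on xs xs (char_entry G z))"
    by (rule det_mat_on_reorder) (use assms vlist[OF assms(1)] in auto)
  finally show ?thesis .
qed

lemma char_poly_nlap_mat_nonzero: "char_poly (nlap_mat G) \<noteq> 0"
proof -
  have "nlap_mat G \<in> carrier_mat (length (vlist (fst G))) (length (vlist (fst G)))"
    unfolding nlap_mat_def Let_def by simp
  from degree_monic_char_poly[OF this] show ?thesis by auto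
qed

lemma sum_nlap_entry:
  assumes "simple_graph G" and "x \<in> fst G"
  shows "(\<Sum>y\<in>fst G. nlap_entry G x y * h y)
       = h x - (\<Sum>y\<in>neighbours G x. h y / sqrt (real (degree G x) * real (degree G y)))"
proof -
  have V: "finite (fst G)" using assms(1) by (rule simple_graph_finite_vertices)
  have N: "neighbours G x \<subseteq> fst G - {x}" using assms(1) by (rule neighbours_subset)
  have "(\<Sum>y\<in>fst G. nlap_entry G x y * h y)
      = nlap_entry G x x * h x + (\<Sum>y\<in>fst G - {x}. nlap_entry G x y * h y)"
    using V assms(2) by (simp add: sum.remove)
  also have "(\<Sum>y\<in>fst G - {x}. nlap_entry G x y * h y) = (\<Sum>y\<in>neighbours G x. nlap_entry G x y * h y)"
    by (rule sum.mono_neutral_right) (use V N in \<open>auto simp: nlap_entry_def neighbours_def\<close>)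
  also have "\<dots> = - (\<Sum>y\<in>neighbours G x. h y / sqrt (real (degree G x) * real (degree G y)))"
    by (subst sum_negf[symmetric], rule sum.cong)
      (use N in \<open>auto simp: nlap_entry_def neighbours_def\<close>)
  finally show ?thesis by (simp add: nlap_entry_def)
qed

lemma sum_nlap_entry_signing:
  assumes G: "simple_graph G" and x: "x \<in> fst G"
    and deg: "\<And>x. x \<in> fst G \<Longrightarrow> degree G x > 0"
    and sE: "\<And>x y. {x, y} \<in> snd G \<Longrightarrow> s y = \<sigma> * s x"
  defines "h \<equiv> \<lambda>y. s y * sqrt (real (degree G y))"
  shows "(\<Sum>y\<in>fst G. nlap_entry G x y * h y) = (1 - \<sigma>) * h x"
proof -
  have dx: "real (degree G x) > 0" using deg x by simp
  have "(\<Sum>y\<in>neighbours G x. h y / sqrt (real (degree G x) * real (degree G y)))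
      = (\<Sum>y\<in>neighbours G x. \<sigma> * s x / sqrt (real (degree G x)))"
  proof (rule sum.cong)
    fix y assume y: "y \<in> neighbours G x"
    then have "y \<in> fst G" using neighbours_subset[OF G] by blast
    then have dy: "real (degree G y) > 0" using deg by simp
    have sy: "s y = \<sigma> * s x" using sE y by (auto simp: neighbours_def)
    show "h y / sqrt (real (degree G x) * real (degree G y)) = \<sigma> * s x / sqrt (real (degree G x))"
      using dx dy sy by (simp add: h_def real_sqrt_mult field_simps)
  qed simp
  also have "\<dots> = real (degree G x) * (\<sigma> * s x / sqrt (real (degree G x)))"
    using degree_eq_card_neighbours[OF G, of x] by simp
  also have "\<dots> = \<sigma> * h x" using dx by (simp add: h_def field_simps)
  finally show ?thesis using sum_nlap_entry[OF G x, of h] by (simp add: algebra_simps)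
qed

lemma nlap_spec_signing:
  assumes G: "simple_graph G" and "fst G \<noteq> {}"
    and deg: "\<And>x. x \<in> fst G \<Longrightarrow> degree G x > 0"
    and s: "\<And>x. s x = 1 \<or> s x = -1"
    and sE: "\<And>x y. {x, y} \<in> snd G \<Longrightarrow> s y = \<sigma> * s x"
  shows "1 - \<sigma> \<in># nlap_spec G"
proof -
  have V: "finite (fst G)" using G by (rule simple_graph_finite_vertices)
  define xs where "xs = vlist (fst G)"
  have xs: "distinct xs" "set xs = fst G" using vlist[OF V] xs_def by auto
  define h where "h y = s y * sqrt (real (degree G y))" for y
  define v where "v = vec (length xs) (\<lambda>l. h (xs ! l))"
  have A: "nlap_mat G = mat_on xs xs (nlap_entry G)"
    unfolding xs_def by (rule nlap_mat_eq_mat_on[OF V])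
  have "nlap_mat G *\<^sub>v v = (1 - \<sigma>) \<cdot>\<^sub>v v"
  proof (rule eq_vecI)
    fix i assume "i < dim_vec ((1 - \<sigma>) \<cdot>\<^sub>v v)"
    then have "i < length xs" by (simp add: v_def)
    moreover have "xs ! i \<in> fst G" using calculation xs(2) nth_mem by blast
    ultimately show "(nlap_mat G *\<^sub>v v) $ i = ((1 - \<sigma>) \<cdot>\<^sub>v v) $ i"
      unfolding A v_def mat_on_mult_vec[OF xs(1)]
      using sum_nlap_entry_signing[OF G _ deg sE] xs(2) by (simp add: h_def)
  qed (simp add: A v_def)
  moreover obtain x where x: "x \<in> fst G" using assms(2) by blast
  then have "h x \<noteq> 0" using s[of x] deg[OF x] by (auto simp: h_def)
  then have "v \<noteq> 0\<^sub>v (length xs)"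
    using x xs(2) unfolding v_def by (metis in_set_conv_nth index_vec index_zero_vec(1))
  ultimately have "eigenvalue (nlap_mat G) (1 - \<sigma>)"
    unfolding eigenvalue_def eigenvector_def A v_def by (intro exI[of _ v]) (simp add: v_def)
  moreover have "nlap_mat G \<in> carrier_mat (length xs) (length xs)" by (simp add: A)
  ultimately have "poly (char_poly (nlap_mat G)) (1 - \<sigma>) = 0"
    by (simp add: eigenvalue_root_char_poly)
  then show ?thesis unfolding nlap_spec_def by (simp add: char_poly_nlap_mat_nonzero)
qed

lemma zero_in_nlap_spec:
  assumes "simple_graph G" and "fst G \<noteq> {}" and "\<And>x. x \<in> fst G \<Longrightarrow> degree G x > 0"
  shows "0 \<in># nlap_spec G"
  using nlap_spec_signing[of G "\<lambda>_. 1" 1] assms by simp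

lemma two_in_nlap_spec_if_bipartite:
  assumes G: "simple_graph G" and "fst G \<noteq> {}" and "\<And>x. x \<in> fst G \<Longrightarrow> degree G x > 0"
    and "bipartite_graph G"
  shows "2 \<in># nlap_spec G"
proof -
  obtain A where A: "\<And>e. e \<in> snd G \<Longrightarrow> card (e \<inter> A) = 1"
    using assms(4) by (auto simp: bipartite_graph_def)
  define s where "s x = (if x \<in> A then 1 else - 1 :: real)" for x
  have "s y = - 1 * s x" if "{x, y} \<in> snd G" for x y
    using A[OF that] card_doubleton_Int_eq_1_iff[OF simple_graph_edge_neq[OF G that]]
    by (auto simp: s_def)
  then show ?thesis
    using nlap_spec_signing[of G s "- 1"] assms(1-3) by (simp add: s_def)
qed

section \<open>One parallel subdivision step\<close>

fun anchor :: "'a svert \<Rightarrow> 'a svert" where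
  "anchor (Mid a b i) = a" | "anchor (Base x) = Base x"

fun far_end :: "'a svert \<Rightarrow> 'a svert" where
  "far_end (Mid a b i) = b" | "far_end (Base x) = Base x"

fun twin :: "'a svert \<Rightarrow> 'a svert" where
  "twin (Mid a b i) = Mid b a i" | "twin (Base x) = Base x"

lemma twin_twin [simp]: "twin (twin w) = w"
  by (cases w) auto

lemma anchor_twin [simp]: "anchor (twin w) = far_end w"
  by (cases w) auto

lemma far_end_twin [simp]: "far_end (twin w) = anchor w"
  by (cases w) auto

lemma twin_eq_iff [simp]: "twin w = twin w' \<longleftrightarrow> w = w'"
  by (metis twin_twin)

lemma char_entry_commute: "char_entry G z x y = char_entry G z y x"
  by (simp add: char_entry_def nlap_entry_def insert_commute mult.commute)

definition orient_edge :: "'v set \<Rightarrow> 'v \<times> 'v" where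
  "orient_edge e = (SOME p. e = {fst p, snd p} \<and> fst p \<noteq> snd p)"

lemma orient_edge:
  assumes "card e = 2"
  shows "e = {fst (orient_edge e), snd (orient_edge e)}" and "fst (orient_edge e) \<noteq> snd (orient_edge e)"
proof -
  obtain a b where "e = {a, b}" "a \<noteq> b" using assms by (meson card_2_iff)
  then have "\<exists>p. e = {fst p, snd p} \<and> fst p \<noteq> snd p" by (intro exI[of _ "(a, b)"]) simp
  then have "e = {fst (orient_edge e), snd (orient_edge e)} \<and> fst (orient_edge e) \<noteq> snd (orient_edge e)"
    unfolding orient_edge_def by (rule someI_ex)
  then show "e = {fst (orient_edge e), snd (orient_edge e)}" and "fst (orient_edge e) \<noteq> snd (orient_edge e)"
    by blast+
qed

locale subdivision =
  fixes V :: "'a svert set" and E :: "'a svert set set" and k :: nat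
  assumes simple: "simple_graph (V, E)"
    and degree_pos: "\<And>x. x \<in> V \<Longrightarrow> degree (V, E) x > 0"
    and Mid_fresh: "\<And>a b i. {a, b} \<in> E \<Longrightarrow> Mid a b i \<notin> V"
    and k_pos: "k \<ge> 1"
begin

abbreviation Sub :: "'a svert graph" where
  "Sub \<equiv> S2k k (V, E)"

definition mids :: "'a svert set" where
  "mids = {Mid u v i | u v i. {u, v} \<in> E \<and> i < k}"

lemma finite_V: "finite V"
  using simple simple_graph_finite_vertices by fastforce

lemma finite_E: "finite E"
  using simple simple_graph_finite_edges by fastforce

lemma edge_in_V: "{a, b} \<in> E \<Longrightarrow> a \<in> V \<and> b \<in> V"
  using simple_graph_edge_vertices[OF simple] by simp

lemma edge_neq: "{a, b} \<in> E \<Longrightarrow> a \<noteq> b"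
  using simple_graph_edge_neq[OF simple] by simp

lemma edge_commute: "{a, b} \<in> E \<Longrightarrow> {b, a} \<in> E"
  by (simp add: insert_commute)

lemma vertices_Sub: "fst Sub = V \<union> mids"
  by (simp add: S2k_def mids_def)

lemma edges_Sub_iff: "e \<in> snd Sub \<longleftrightarrow>
   (\<exists>a b i. {a, b} \<in> E \<and> i < k \<and> (e = {a, Mid a b i} \<or> e = {Mid a b i, Mid b a i}))"
  unfolding S2k_def by auto

lemma mids_iff: "w \<in> mids \<longleftrightarrow> (\<exists>a b i. w = Mid a b i \<and> {a, b} \<in> E \<and> i < k)"
  unfolding mids_def by auto

lemma midsE:
  assumes "w \<in> mids"
  obtains i where "w = Mid (anchor w) (far_end w) i" and "{anchor w, far_end w} \<in> E" and "i < k"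
  using assms unfolding mids_iff by auto

lemma Mid_in_mids: "{a, b} \<in> E \<Longrightarrow> i < k \<Longrightarrow> Mid a b i \<in> mids"
  unfolding mids_iff by blast

lemma anchor_in_V: "w \<in> mids \<Longrightarrow> anchor w \<in> V"
  by (metis midsE edge_in_V)

lemma anchor_neq_far_end: "w \<in> mids \<Longrightarrow> anchor w \<noteq> far_end w"
  by (metis midsE edge_neq)

lemma mids_notin_V: "w \<in> mids \<Longrightarrow> w \<notin> V"
  by (metis midsE Mid_fresh)

lemma twin_in_mids: "w \<in> mids \<Longrightarrow> twin w \<in> mids"
  by (metis midsE twin.simps(1) edge_commute Mid_in_mids)

lemma twin_neq: "w \<in> mids \<Longrightarrow> twin w \<noteq> w"
  by (metis anchor_neq_far_end anchor_twin twin_twin)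

lemma finite_mids: "finite mids"
proof -
  have "mids \<subseteq> (\<lambda>(a, b, i). Mid a b i) ` (V \<times> V \<times> {..<k})"
    unfolding mids_def using edge_in_V by force
  then show ?thesis using finite_V by (meson finite_SigmaI finite_imageI finite_lessThan finite_subset)
qed

lemma not_adjacent_V_V:
  assumes "u \<in> V" and "v \<in> V"
  shows "{u, v} \<notin> snd Sub"
  using assms Mid_fresh edge_commute unfolding edges_Sub_iff by (auto simp: doubleton_eq_iff)

lemma adjacent_V_mids_iff:
  assumes u: "u \<in> V" and w: "w \<in> mids"
  shows "{u, w} \<in> snd Sub \<longleftrightarrow> u = anchor w"
proof
  assume "{u, w} \<in> snd Sub"
  then obtain a b i where ab: "{a, b} \<in> E"
    and "{u, w} = {a, Mid a b i} \<or> {u, w} = {Mid a b i, Mid b a i}"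
    unfolding edges_Sub_iff by blast
  moreover have "Mid a b i \<notin> V" "Mid b a i \<notin> V" using Mid_fresh ab edge_commute by blast+
  ultimately show "u = anchor w" using u by (auto simp: doubleton_eq_iff)
next
  assume "u = anchor w"
  with w show "{u, w} \<in> snd Sub" unfolding edges_Sub_iff by (metis midsE)
qed

lemma adjacent_mids_mids_iff:
  assumes w: "w \<in> mids" and w': "w' \<in> mids"
  shows "{w, w'} \<in> snd Sub \<longleftrightarrow> w' = twin w"
proof
  assume "{w, w'} \<in> snd Sub"
  then obtain a b i where ab: "{a, b} \<in> E"
    and e: "{w, w'} = {a, Mid a b i} \<or> {w, w'} = {Mid a b i, Mid b a i}"
    unfolding edges_Sub_iff by blast
  have "a \<notin> {w, w'}" using edge_in_V[OF ab] mids_notin_V w w' by blast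
  with e have "{w, w'} = {Mid a b i, Mid b a i}" by blast
  then show "w' = twin w" using twin_neq[OF w] by (auto simp: doubleton_eq_iff)
next
  assume "w' = twin w"
  with w show "{w, w'} \<in> snd Sub" unfolding edges_Sub_iff by (metis midsE twin.simps(1))
qed

lemma simple_graph_Sub: "simple_graph Sub"
  unfolding simple_graph_def
proof (intro conjI ballI)
  show "finite (fst Sub)" unfolding vertices_Sub using finite_V finite_mids by simp
next
  fix e assume "e \<in> snd Sub"
  then obtain a b i where ab: "{a, b} \<in> E" "i < k"
    and e: "e = {a, Mid a b i} \<or> e = {Mid a b i, Mid b a i}"
    unfolding edges_Sub_iff by blast
  have "Mid a b i \<in> mids" "Mid b a i \<in> mids" using Mid_in_mids ab edge_commute by blast+
  moreover have "a \<in> V" "Mid a b i \<notin> V" using edge_in_V Mid_fresh ab by blast+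
  ultimately show "e \<subseteq> fst Sub" and "card e = 2"
    using e edge_neq[OF ab(1)] unfolding vertices_Sub by auto
qed

lemma neighbours_Sub_V:
  assumes "u \<in> V"
  shows "neighbours Sub u = {w \<in> mids. anchor w = u}"
proof -
  have "{u, y} \<in> snd Sub \<longleftrightarrow> y \<in> mids \<and> anchor y = u" for y
  proof
    assume e: "{u, y} \<in> snd Sub"
    then have "y \<in> V \<union> mids" using simple_graph_edge_vertices[OF simple_graph_Sub e] vertices_Sub by simp
    with e show "y \<in> mids \<and> anchor y = u"
      using not_adjacent_V_V[OF assms] adjacent_V_mids_iff[OF assms] by auto
  qed (use adjacent_V_mids_iff[OF assms] in auto)
  then show ?thesis by (auto simp: neighbours_def)
qed

lemma neighbours_Sub_mids:
  assumes w: "w \<in> mids"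
  shows "neighbours Sub w = {anchor w, twin w}"
proof -
  have "y \<in> V \<union> mids" if "{w, y} \<in> snd Sub" for y
    using simple_graph_edge_vertices[OF simple_graph_Sub that] vertices_Sub by simp
  moreover have "{w, y} \<in> snd Sub \<longleftrightarrow> y = anchor w" if "y \<in> V" for y
    using adjacent_V_mids_iff[OF that w] by (simp add: insert_commute)
  ultimately show ?thesis
    using adjacent_mids_mids_iff[OF w] anchor_in_V[OF w] twin_in_mids[OF w]
    by (auto simp: neighbours_def)
qed

lemma mids_anchored_at:
  assumes "u \<in> V"
  shows "{w \<in> mids. anchor w = u} = (\<lambda>(b, i). Mid u b i) ` (neighbours (V, E) u \<times> {..<k})"
  using assms unfolding neighbours_def by (auto simp: mids_iff)

lemma degree_Sub_V:
  assumes "u \<in> V"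
  shows "degree Sub u = k * degree (V, E) u"
proof -
  have "degree Sub u = card ((\<lambda>(b, i). Mid u b i) ` (neighbours (V, E) u \<times> {..<k}))"
    using degree_eq_card_neighbours[OF simple_graph_Sub] neighbours_Sub_V[OF assms]
      mids_anchored_at[OF assms] by simp
  also have "\<dots> = card (neighbours (V, E) u \<times> {..<k})"
    by (rule card_image) (auto intro: inj_onI)
  finally show ?thesis
    using degree_eq_card_neighbours[OF simple, of u] by (simp add: card_cartesian_product)
qed

lemma degree_Sub_mids:
  assumes "w \<in> mids"
  shows "degree Sub w = 2"
proof -
  have "anchor w \<noteq> twin w" using assms anchor_in_V twin_in_mids mids_notin_V by metis
  then show ?thesis using degree_eq_card_neighbours[OF simple_graph_Sub] neighbours_Sub_mids[OF assms] by simp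
qed

definition cross_weight :: "'a svert \<Rightarrow> real" where
  "cross_weight u = 1 / sqrt (real (k * degree (V, E) u) * 2)"

lemma char_entry_Sub_V_V:
  assumes "u \<in> V" and "v \<in> V"
  shows "char_entry Sub z u v = (if u = v then z - 1 else 0)"
  using not_adjacent_V_V[OF assms] by (simp add: char_entry_def nlap_entry_def)

lemma char_entry_Sub_V_mids:
  assumes u: "u \<in> V" and w: "w \<in> mids"
  shows "char_entry Sub z u w = (if u = anchor w then cross_weight u else 0)"
  using adjacent_V_mids_iff[OF u w] mids_notin_V[OF w] u degree_Sub_V[OF u] degree_Sub_mids[OF w]
  by (auto simp: char_entry_def nlap_entry_def cross_weight_def)

lemma char_entry_Sub_mids_mids:
  assumes w: "w \<in> mids" and w': "w' \<in> mids"
  shows "char_entry Sub z w w' = (if w = w' then z - 1 else if w' = twin w then 1/2 else 0)"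
proof -
  have "sqrt (real 2 * real 2) = 2" by (simp add: real_sqrt_mult_self)
  then show ?thesis
    using adjacent_mids_mids_iff[OF w w'] twin_neq[OF w] degree_Sub_mids[OF w] degree_Sub_mids[OF w']
    by (auto simp: char_entry_def nlap_entry_def)
qed

text \<open>One subdivision vertex out of each twin pair: the one next to the first endpoint of a
  fixed orientation of its edge.\<close>
definition mids_fwd :: "'a svert list" where
  "mids_fwd = map (\<lambda>(e, i). Mid (fst (orient_edge e)) (snd (orient_edge e)) i)
     (List.product (vlist E) [0..<k])"

lemma orient_edge_E:
  assumes "e \<in> E"
  shows "e = {fst (orient_edge e), snd (orient_edge e)}" and "fst (orient_edge e) \<noteq> snd (orient_edge e)"
  using assms simple orient_edge by (auto simp: simple_graph_def)

lemma length_mids_fwd: "length mids_fwd = card E * k"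
  using distinct_vlist[OF finite_E] set_vlist[OF finite_E]
  by (simp add: mids_fwd_def distinct_card[symmetric])

lemma set_mids_fwd_iff:
  "w \<in> set mids_fwd \<longleftrightarrow> (\<exists>e\<in>E. \<exists>i<k. w = Mid (fst (orient_edge e)) (snd (orient_edge e)) i)"
  unfolding mids_fwd_def using set_vlist[OF finite_E] by auto

lemma mids_fwd_in_mids: "w \<in> set mids_fwd \<Longrightarrow> w \<in> mids"
  unfolding set_mids_fwd_iff by (metis orient_edge_E(1) Mid_in_mids)

lemma distinct_mids_fwd: "distinct mids_fwd"
  unfolding mids_fwd_def
proof (rule distinct_map[THEN iffD2], intro conjI)
  show "distinct (List.product (vlist E) [0..<k])"
    using distinct_vlist[OF finite_E] by (simp add: distinct_product)
  show "inj_on (\<lambda>(e, i). Mid (fst (orient_edge e)) (snd (orient_edge e)) i) (set (List.product (vlist E) [0..<k]))"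
  proof (rule inj_onI)
    fix x y
    assume x: "x \<in> set (List.product (vlist E) [0..<k])" and y: "y \<in> set (List.product (vlist E) [0..<k])"
      and eq: "(\<lambda>(e, i). Mid (fst (orient_edge e)) (snd (orient_edge e)) i) x
         = (\<lambda>(e, i). Mid (fst (orient_edge e)) (snd (orient_edge e)) i) y"
    obtain e i e' i' where xy: "x = (e, i)" "y = (e', i')" by fastforce
    have "e \<in> E" "e' \<in> E" using x y xy set_vlist[OF finite_E] by auto
    moreover have "fst (orient_edge e) = fst (orient_edge e')" "snd (orient_edge e) = snd (orient_edge e')"
      and "i = i'" using eq xy by auto
    ultimately show "x = y" using xy orient_edge_E(1) by metis
  qed
qed

lemma mids_fwd_neq_twin:
  assumes "w \<in> set mids_fwd" and "w' \<in> set mids_fwd"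
  shows "w \<noteq> twin w'"
proof
  assume eq: "w = twin w'"
  obtain e i where e: "e \<in> E" and w: "w = Mid (fst (orient_edge e)) (snd (orient_edge e)) i"
    using assms(1) unfolding set_mids_fwd_iff by blast
  obtain e' i' where e': "e' \<in> E" and w': "w' = Mid (fst (orient_edge e')) (snd (orient_edge e')) i'"
    using assms(2) unfolding set_mids_fwd_iff by blast
  have "fst (orient_edge e) = snd (orient_edge e')" and "snd (orient_edge e) = fst (orient_edge e')"
    using eq w w' by auto
  moreover from this have "e = e'"
    using orient_edge_E(1)[OF e] orient_edge_E(1)[OF e'] by (metis insert_commute)
  ultimately show False using orient_edge_E(2)[OF e] by simp
qed

lemma distinct_mids_enum: "distinct (mids_fwd @ map twin mids_fwd)"
  using distinct_mids_fwd mids_fwd_neq_twin by (auto simp: distinct_map inj_on_def)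

lemma set_mids_enum: "set (mids_fwd @ map twin mids_fwd) = mids"
proof (intro equalityI subsetI)
  fix w assume "w \<in> set (mids_fwd @ map twin mids_fwd)"
  then show "w \<in> mids" using mids_fwd_in_mids twin_in_mids by auto
next
  fix w assume "w \<in> mids"
  then obtain a b i where w: "w = Mid a b i" and ab: "{a, b} \<in> E" and "i < k"
    unfolding mids_iff by blast
  then have fwd: "Mid (fst (orient_edge {a, b})) (snd (orient_edge {a, b})) i \<in> set mids_fwd"
    unfolding set_mids_fwd_iff by blast
  have "{a, b} = {fst (orient_edge {a, b}), snd (orient_edge {a, b})}"
    by (rule orient_edge_E(1)[OF ab])
  then consider "fst (orient_edge {a, b}) = a" "snd (orient_edge {a, b}) = b"
    | "fst (orient_edge {a, b}) = b" "snd (orient_edge {a, b}) = a"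
    using edge_neq[OF ab] by (auto simp: doubleton_eq_iff)
  then show "w \<in> set (mids_fwd @ map twin mids_fwd)"
  proof cases
    case 2
    then have "w = twin (Mid (fst (orient_edge {a, b})) (snd (orient_edge {a, b})) i)" using w by simp
    with fwd have "w \<in> twin ` set mids_fwd" by blast
    then show ?thesis by simp
  qed (use fwd w in auto)
qed

lemma card_mids: "card mids = 2 * (card E * k)"
  using distinct_card[OF distinct_mids_enum] set_mids_enum length_mids_fwd by simp

text \<open>In the enumeration \<open>mids_fwd @ map twin mids_fwd\<close>, the subdivision block of
  \<open>z I - L\<close> has the block form \<open>[[(z-1) I, I/2], [I/2, (z-1) I]]\<close>.\<close>
lemma det_mids_block:
  "det (mat_on (mids_fwd @ map twin mids_fwd) (mids_fwd @ map twin mids_fwd) (char_entry Sub z))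
   = ((z - 1)\<^sup>2 - 1/4) ^ (card E * k)"
proof -
  let ?m = "length mids_fwd"
  have W: "w \<in> mids" "twin w \<in> mids" if "w \<in> set mids_fwd" for w
    using that mids_fwd_in_mids twin_in_mids by blast+
  have "mat_on mids_fwd mids_fwd (char_entry Sub z) = (z - 1) \<cdot>\<^sub>m 1\<^sub>m ?m"
    by (rule mat_on_diagonal[OF distinct_mids_fwd])
      (use W mids_fwd_neq_twin in \<open>simp add: char_entry_Sub_mids_mids\<close>)
  moreover have "mat_on mids_fwd (map twin mids_fwd) (char_entry Sub z) = (1/2) \<cdot>\<^sub>m 1\<^sub>m ?m"
    unfolding mat_on_map_right
    by (rule mat_on_diagonal[OF distinct_mids_fwd])
      (use W mids_fwd_neq_twin in \<open>simp add: char_entry_Sub_mids_mids\<close>)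
  moreover have "mat_on (map twin mids_fwd) mids_fwd (char_entry Sub z) = (1/2) \<cdot>\<^sub>m 1\<^sub>m ?m"
    unfolding mat_on_map_left
    by (rule mat_on_diagonal[OF distinct_mids_fwd])
      (use W mids_fwd_neq_twin in \<open>auto simp: char_entry_Sub_mids_mids\<close>)
  moreover have "mat_on (map twin mids_fwd) (map twin mids_fwd) (char_entry Sub z) = (z - 1) \<cdot>\<^sub>m 1\<^sub>m ?m"
    unfolding mat_on_map_left mat_on_map_right
    by (rule mat_on_diagonal[OF distinct_mids_fwd])
      (use W mids_fwd_neq_twin in \<open>auto simp: char_entry_Sub_mids_mids\<close>)
  ultimately show ?thesis
    by (simp add: mat_on_append det_four_block_smult_one length_mids_fwd power2_eq_square)
qed

text \<open>The entries of \<open>Y = D\<^sup>-\<^sup>1 C\<close>, where \<open>D\<close> is the subdivision block of \<open>z I - L\<close> (made of the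
  \<open>2 \<times> 2\<close> blocks \<open>[[z-1, 1/2], [1/2, z-1]]\<close> of twin pairs, with determinant \<open>twin_det z\<close>) and
  \<open>C\<close> its block between subdivision and old vertices.\<close>
definition schur_factor :: "real \<Rightarrow> 'a svert \<Rightarrow> 'a svert \<Rightarrow> real" where
  "schur_factor z w u = ((z - 1) * (if u = anchor w then cross_weight u else 0)
      - (if u = far_end w then cross_weight u else 0) / 2) / twin_det z"

lemma mids_block_schur_factor:
  assumes "twin_det z \<noteq> 0" and w: "w \<in> mids" and u: "u \<in> V"
  shows "(\<Sum>w'\<in>mids. char_entry Sub z w w' * schur_factor z w' u) = char_entry Sub z w u"
proof -
  have tw: "twin w \<in> mids" "twin w \<noteq> w" using twin_in_mids[OF w] twin_neq[OF w] by auto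
  have "(\<Sum>w'\<in>mids. char_entry Sub z w w' * schur_factor z w' u)
      = (\<Sum>w'\<in>{w, twin w}. char_entry Sub z w w' * schur_factor z w' u)"
    by (rule sum.mono_neutral_right) (use finite_mids w tw char_entry_Sub_mids_mids[OF w] in auto)
  also have "\<dots> = (z - 1) * schur_factor z w u + 1/2 * schur_factor z (twin w) u"
    using tw char_entry_Sub_mids_mids[OF w w] char_entry_Sub_mids_mids[OF w tw(1)] by simp
  also have "\<dots> = (if u = anchor w then cross_weight u else 0)"
  proof -
    have "(z - 1) * ((z - 1) * c / twin_det z) + 1/2 * (- (c / 2) / twin_det z) = c" for c
    proof -
      have "(z - 1) * ((z - 1) * c / twin_det z) + 1/2 * (- (c / 2) / twin_det z)
          = ((z - 1) * ((z - 1) * c) - c / 4) / twin_det z"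
        using assms(1) by (simp add: field_simps)
      also have "(z - 1) * ((z - 1) * c) - c / 4 = c * twin_det z"
        by (simp add: twin_det_def power2_eq_square algebra_simps)
      finally show ?thesis using assms(1) by simp
    qed
    moreover have "(z - 1) * (- (c / 2) / twin_det z) + 1/2 * ((z - 1) * c / twin_det z) = 0" for c
      by (simp add: field_simps)
    ultimately show ?thesis
      using anchor_neq_far_end[OF w] by (auto simp: schur_factor_def)
  qed
  also have "\<dots> = char_entry Sub z w u"
    using char_entry_Sub_V_mids[OF u w] char_entry_commute by metis
  finally show ?thesis .
qed

lemma cross_weight_mult:
  assumes "u \<in> V" and "v \<in> V"
  shows "real k * (cross_weight u * cross_weight v)
       = 1 / (2 * sqrt (real (degree (V, E) u) * real (degree (V, E) v)))"
proof -
  have k: "real k > 0" using k_pos by simp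
  have "real (degree (V, E) u) > 0" and "real (degree (V, E) v) > 0" using degree_pos assms by auto
  then have "cross_weight u * cross_weight v
      = 1 / (sqrt (real k * real k * 4) * sqrt (real (degree (V, E) u) * real (degree (V, E) v)))"
    unfolding cross_weight_def using k by (simp add: real_sqrt_mult field_simps)
  also have "sqrt (real k * real k * 4) = 2 * real k"
    using k by (simp add: real_sqrt_mult real_sqrt_mult_self)
  finally show ?thesis using k by (simp add: field_simps)
qed

lemma sum_mids_anchored:
  assumes "u \<in> V"
  shows "(\<Sum>w\<in>mids. char_entry Sub z u w * f w)
       = (\<Sum>(b, i)\<in>neighbours (V, E) u \<times> {..<k}. cross_weight u * f (Mid u b i))"
proof -
  have "(\<Sum>w\<in>mids. char_entry Sub z u w * f w) = (\<Sum>w\<in>mids. if anchor w = u then cross_weight u * f w else 0)"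
    by (rule sum.cong) (auto simp: char_entry_Sub_V_mids[OF assms])
  also have "\<dots> = (\<Sum>w\<in>{w \<in> mids. anchor w = u}. cross_weight u * f w)"
    by (rule sum.inter_filter[OF finite_mids, symmetric])
  also have "\<dots> = (\<Sum>(b, i)\<in>neighbours (V, E) u \<times> {..<k}. cross_weight u * f (Mid u b i))"
    unfolding mids_anchored_at[OF assms] by (subst sum.reindex) (auto intro: inj_onI simp: case_prod_beta)
  finally show ?thesis .
qed

lemma sum_mids_schur_factor:
  assumes u: "u \<in> V" and v: "v \<in> V"
  shows "(\<Sum>w\<in>mids. char_entry Sub z u w * schur_factor z w v)
       = (if u = v then (z - 1) / (2 * twin_det z) else nlap_entry (V, E) u v / (4 * twin_det z))"
proof (cases "u = v")
  case True
  have "u \<notin> neighbours (V, E) u" using neighbours_subset[OF simple] by blast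
  then have "(\<Sum>w\<in>mids. char_entry Sub z u w * schur_factor z w v)
      = (\<Sum>(b, i)\<in>neighbours (V, E) u \<times> {..<k}. (z - 1) * (cross_weight u * cross_weight u) / twin_det z)"
    unfolding sum_mids_anchored[OF u] using True
    by (intro sum.cong) (auto simp: schur_factor_def)
  also have "\<dots> = real (degree (V, E) u) * (real k * (cross_weight u * cross_weight u)) * (z - 1) / twin_det z"
    using degree_eq_card_neighbours[OF simple, of u] finite_neighbours[OF simple, of u]
    by (simp add: card_cartesian_product)
  also have "\<dots> = (z - 1) / (2 * twin_det z)"
    using cross_weight_mult[OF u u] degree_pos[OF u] by (simp add: real_sqrt_mult_self)
  finally show ?thesis using True by simp
next
  case False
  have "(\<Sum>w\<in>mids. char_entry Sub z u w * schur_factor z w v)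
      = (\<Sum>b\<in>neighbours (V, E) u. \<Sum>i<k. if b = v then - (cross_weight u * cross_weight v) / (2 * twin_det z) else 0)"
    unfolding sum_mids_anchored[OF u] sum.cartesian_product using False
    by (intro sum.cong) (auto simp: schur_factor_def)
  also have "\<dots> = (\<Sum>b\<in>neighbours (V, E) u.
      if b = v then - (real k * (cross_weight u * cross_weight v)) / (2 * twin_det z) else 0)"
    by (intro sum.cong) auto
  also have "\<dots> = (if v \<in> neighbours (V, E) u then - (real k * (cross_weight u * cross_weight v)) / (2 * twin_det z) else 0)"
    using finite_neighbours[OF simple, of u] by (simp add: sum.delta')
  also have "\<dots> = nlap_entry (V, E) u v / (4 * twin_det z)"
    using False cross_weight_mult[OF u v] by (simp add: nlap_entry_def neighbours_def)
  finally show ?thesis using False by simp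
qed

lemma schur_complement_entry:
  assumes "twin_det z \<noteq> 0" and u: "u \<in> V" and v: "v \<in> V"
  shows "char_entry Sub z u v - (\<Sum>w\<in>mids. char_entry Sub z u w * schur_factor z w v)
       = char_entry (V, E) (poly subdivision_cubic z) u v / (4 * twin_det z)"
proof (cases "u = v")
  case True
  have "(z - 1) - (z - 1) / (2 * twin_det z) = (poly subdivision_cubic z - 1) / (4 * twin_det z)"
    using assms(1) unfolding twin_det_def
    by (simp add: subdivision_cubic_def field_simps power2_eq_square) algebra
  then show ?thesis
    using True char_entry_Sub_V_V[OF u v] sum_mids_schur_factor[OF u v]
    by (simp add: char_entry_def nlap_entry_def)
next
  case False
  then show ?thesis
    using char_entry_Sub_V_V[OF u v] sum_mids_schur_factor[OF u v]
    by (simp add: char_entry_def)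
qed

lemma poly_char_poly_Sub:
  assumes q: "twin_det z \<noteq> 0"
  shows "poly (char_poly (nlap_mat Sub)) z
       = poly (char_poly (nlap_mat (V, E))) (poly subdivision_cubic z) * twin_det z ^ (card E * k)
         / (4 * twin_det z) ^ card V"
proof -
  define xs where "xs = vlist V"
  have xs: "distinct xs" "set xs = V" using vlist[OF finite_V] xs_def by auto
  define ms where "ms = mids_fwd @ map twin mids_fwd"
  have ms: "distinct ms" "set ms = mids" using distinct_mids_enum set_mids_enum ms_def by auto
  define g where "g = char_entry Sub z"
  define Y where "Y = mat_on ms xs (schur_factor z)"
  have "distinct (xs @ ms)" using xs ms mids_notin_V by auto
  moreover have "set (xs @ ms) = fst Sub" using xs ms vertices_Sub by simp
  ultimately have "poly (char_poly (nlap_mat Sub)) z = det (mat_on (xs @ ms) (xs @ ms) g)"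
    unfolding g_def using simple_graph_Sub by (intro poly_char_poly_nlap_mat simple_graph_finite_vertices)
  also have "\<dots> = det (mat_on xs xs g - mat_on xs ms g * Y) * det (mat_on ms ms g)"
  proof -
    have "mat_on ms ms g * Y = mat_on ms xs g"
      unfolding Y_def mat_on_mult[OF ms(1)]
      by (rule mat_on_cong) (use ms xs mids_block_schur_factor[OF q] in \<open>simp add: g_def\<close>)
    then show ?thesis unfolding mat_on_append
      by (intro det_four_block_mat_schur) (auto simp: Y_def)
  qed
  also have "mat_on xs xs g - mat_on xs ms g * Y
      = (1 / (4 * twin_det z)) \<cdot>\<^sub>m mat_on xs xs (char_entry (V, E) (poly subdivision_cubic z))"
    unfolding Y_def mat_on_mult[OF ms(1)] mat_on_minus mat_on_smult
    by (rule mat_on_cong) (use ms xs schur_complement_entry[OF q] in \<open>simp add: g_def\<close>)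
  also have "det ((1 / (4 * twin_det z)) \<cdot>\<^sub>m mat_on xs xs (char_entry (V, E) (poly subdivision_cubic z)))
      = (1 / (4 * twin_det z)) ^ card V * det (mat_on xs xs (char_entry (V, E) (poly subdivision_cubic z)))"
    using distinct_card[OF xs(1)] xs(2) by simp
  also have "det (mat_on ms ms g) = twin_det z ^ (card E * k)"
    unfolding ms_def g_def twin_det_def by (rule det_mids_block)
  also have "det (mat_on xs xs (char_entry (V, E) (poly subdivision_cubic z)))
      = poly (char_poly (nlap_mat (V, E))) (poly subdivision_cubic z)"
    by (rule poly_char_poly_nlap_mat[symmetric]) (use finite_V xs in auto)
  finally show ?thesis by (simp add: power_one_over)
qed

lemma char_poly_Sub_identity:
  "char_poly (nlap_mat Sub) * subdivision_quadratic ^ card V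
   = Polynomial.smult ((1/4) ^ (card E * k))
       (subdivision_quadratic ^ (card E * k) * (char_poly (nlap_mat (V, E)) \<circ>\<^sub>p subdivision_cubic))"
proof (rule poly_eqI_cofinite)
  show "finite {z. poly subdivision_quadratic z = 0}"
    by (rule poly_roots_finite[OF subdivision_quadratic_nonzero])
next
  fix z assume "z \<notin> {z. poly subdivision_quadratic z = 0}"
  then have "twin_det z \<noteq> 0" by (simp add: poly_subdivision_quadratic)
  moreover have "(1/4 :: real) ^ n * 4 ^ n = 1" for n
    by (simp flip: power_mult_distrib)
  ultimately show "poly (char_poly (nlap_mat Sub) * subdivision_quadratic ^ card V) z
      = poly (Polynomial.smult ((1/4) ^ (card E * k))
          (subdivision_quadratic ^ (card E * k) * (char_poly (nlap_mat (V, E)) \<circ>\<^sub>p subdivision_cubic))) z"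
    by (simp add: poly_char_poly_Sub poly_subdivision_quadratic poly_pcompose power_mult_distrib
        field_simps)
qed

lemma nlap_spec_Sub:
  "nlap_spec Sub + repeat_mset (card V) {#1/2, 3/2#}
   = repeat_mset (card E * k) {#1/2, 3/2#} + g_all (nlap_spec (V, E))"
proof -
  have Q: "subdivision_quadratic ^ n \<noteq> 0" for n
    using subdivision_quadratic_nonzero by simp
  have "char_poly (nlap_mat (V, E)) \<circ>\<^sub>p subdivision_cubic \<noteq> 0"
    using char_poly_nlap_mat_nonzero pcompose_eq_0_iff[of subdivision_cubic]
    by (simp add: subdivision_cubic_def)
  then show ?thesis
    using arg_cong[OF char_poly_Sub_identity, of proots]
    by (simp add: proots_mult[OF char_poly_nlap_mat_nonzero Q] proots_mult[OF Q] proots_power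
        proots_subdivision_quadratic proots_pcompose_subdivision_cubic[OF char_poly_nlap_mat_nonzero]
        nlap_spec_def)
qed

lemma card_vertices_Sub: "card (fst Sub) = card V + 2 * (card E * k)"
proof -
  have "V \<inter> mids = {}" using mids_notin_V by blast
  then show ?thesis unfolding vertices_Sub using finite_V finite_mids card_mids by (simp add: card_Un_disjoint)
qed

lemma card_edges_Sub: "card (snd Sub) = 3 * (card E * k)"
proof -
  have "V \<inter> mids = {}" using mids_notin_V by blast
  have "2 * card (snd Sub) = (\<Sum>x\<in>V. degree Sub x) + (\<Sum>x\<in>mids. degree Sub x)"
    using handshake[OF simple_graph_Sub] vertices_Sub finite_V finite_mids \<open>V \<inter> mids = {}\<close>
    by (simp add: sum.union_disjoint)
  also have "\<dots> = k * (\<Sum>x\<in>V. degree (V, E) x) + 2 * card mids"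
    by (simp add: degree_Sub_V degree_Sub_mids sum_distrib_left)
  also have "\<dots> = 2 * (3 * (card E * k))"
    using handshake[OF simple] card_mids by simp
  finally show ?thesis by simp
qed

end

section \<open>Spanning trees\<close>

definition adjacency :: "'v graph \<Rightarrow> 'v rel" where
  "adjacency G = {(x, y). {x, y} \<in> snd G}"

lemma connected_degree_pos:
  assumes G: "simple_graph G" and "connected_graph G" and "card (fst G) \<ge> 2" and x: "x \<in> fst G"
  shows "degree G x > 0"
proof -
  have "\<not> fst G \<subseteq> {x}"
    using \<open>card (fst G) \<ge> 2\<close> card_mono[of "{x}" "fst G"] by auto
  then obtain y where y: "y \<in> fst G" "y \<noteq> x" by blast
  have "(x, y) \<in> (adjacency G)\<^sup>*"
    using assms(2) x y unfolding connected_graph_def adjacency_def by blast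
  then obtain z where "(x, z) \<in> adjacency G" using y(2) by (metis converse_rtranclE)
  then have "{x, z} \<in> snd G" by (simp add: adjacency_def)
  then show ?thesis using degree_pos_if_in_edge[OF G] by blast
qed

text \<open>Joining each non-root vertex to a neighbour one step closer to the root gives
  \<open>|V| - 1\<close> distinct edges.\<close>
context
  fixes G :: "'v graph" and root :: 'v
  assumes G: "simple_graph G" and connected: "connected_graph G" and root: "root \<in> fst G"
begin

definition bfs_dist :: "'v \<Rightarrow> nat" where
  "bfs_dist x = (LEAST n. (x, root) \<in> adjacency G ^^ n)"

lemma bfs_dist_path:
  assumes "x \<in> fst G"
  shows "(x, root) \<in> adjacency G ^^ bfs_dist x"
proof -
  have "\<exists>n. (x, root) \<in> adjacency G ^^ n"
    using connected root assms unfolding connected_graph_def adjacency_def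
    by (metis (no_types, lifting) rtrancl_power)
  then show ?thesis unfolding bfs_dist_def by (rule LeastI_ex)
qed

lemma bfs_dist_le: "(x, root) \<in> adjacency G ^^ n \<Longrightarrow> bfs_dist x \<le> n"
  unfolding bfs_dist_def by (rule Least_le)

lemma bfs_parent_exists:
  assumes x: "x \<in> fst G" and "x \<noteq> root"
  shows "\<exists>p. {x, p} \<in> snd G \<and> bfs_dist p + 1 = bfs_dist x"
proof -
  have "bfs_dist x \<noteq> 0"
  proof
    assume "bfs_dist x = 0"
    with bfs_dist_path[OF x] have "x = root" by simp
    with \<open>x \<noteq> root\<close> show False ..
  qed
  then obtain n where n: "bfs_dist x = Suc n" by (cases "bfs_dist x") auto
  then have "(x, root) \<in> adjacency G ^^ Suc n" using bfs_dist_path[OF x] by simp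
  then obtain p where p: "(x, p) \<in> adjacency G" "(p, root) \<in> adjacency G ^^ n"
    by (metis relpow_Suc_D2)
  then have e: "{x, p} \<in> snd G" by (simp add: adjacency_def)
  then have "p \<in> fst G" using simple_graph_edge_vertices[OF G] by blast
  then have "(x, root) \<in> adjacency G ^^ Suc (bfs_dist p)"
    using p(1) bfs_dist_path by (metis relpow_Suc_I2)
  then have "bfs_dist x \<le> bfs_dist p + 1" using bfs_dist_le by fastforce
  moreover have "bfs_dist p \<le> n" using bfs_dist_le p(2) by blast
  ultimately show ?thesis using e n by auto
qed

definition bfs_parent :: "'v \<Rightarrow> 'v" where
  "bfs_parent x = (SOME p. {x, p} \<in> snd G \<and> bfs_dist p + 1 = bfs_dist x)"

lemma bfs_parent:
  "x \<in> fst G \<Longrightarrow> x \<noteq> root \<Longrightarrow> {x, bfs_parent x} \<in> snd G \<and> bfs_dist (bfs_parent x) + 1 = bfs_dist x"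
  unfolding bfs_parent_def by (rule someI_ex) (rule bfs_parent_exists)

lemma inj_on_tree_edge: "inj_on (\<lambda>x. {x, bfs_parent x}) (fst G - {root})"
proof (rule inj_onI)
  fix x y assume x: "x \<in> fst G - {root}" and y: "y \<in> fst G - {root}"
    and eq: "{x, bfs_parent x} = {y, bfs_parent y}"
  show "x = y"
  proof (rule ccontr)
    assume "x \<noteq> y"
    with eq have "x = bfs_parent y \<and> bfs_parent x = y" by (auto simp: doubleton_eq_iff)
    moreover have "bfs_dist (bfs_parent x) + 1 = bfs_dist x" "bfs_dist (bfs_parent y) + 1 = bfs_dist y"
      using bfs_parent x y by auto
    ultimately show False by auto
  qed
qed

lemma tree_edges_subset: "(\<lambda>x. {x, bfs_parent x}) ` (fst G - {root}) \<subseteq> snd G"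
  using bfs_parent by auto

lemma card_vertices_le_Suc_card_edges: "card (fst G) \<le> card (snd G) + 1"
  using card_inj_on_le[OF inj_on_tree_edge tree_edges_subset simple_graph_finite_edges[OF G]]
    root simple_graph_finite_vertices[OF G] by (simp add: card_Diff_singleton)

text \<open>If the tree edges were all the edges, colouring by the parity of \<open>bfs_dist\<close> would
  make \<open>G\<close> bipartite.\<close>
lemma card_vertices_le_card_edges_if_not_bipartite:
  assumes "\<not> bipartite_graph G"
  shows "card (fst G) \<le> card (snd G)"
proof (rule ccontr)
  assume "\<not> card (fst G) \<le> card (snd G)"
  then have "card ((\<lambda>x. {x, bfs_parent x}) ` (fst G - {root})) = card (snd G)"
    using card_vertices_le_Suc_card_edges card_image[OF inj_on_tree_edge] root
      simple_graph_finite_vertices[OF G] by (simp add: card_Diff_singleton)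
  then have tree: "(\<lambda>x. {x, bfs_parent x}) ` (fst G - {root}) = snd G"
    using tree_edges_subset simple_graph_finite_edges[OF G] by (metis card_subset_eq)
  have "card (e \<inter> {x. even (bfs_dist x)}) = 1" if "e \<in> snd G" for e
  proof -
    obtain x where x: "x \<in> fst G - {root}" "e = {x, bfs_parent x}" using tree \<open>e \<in> snd G\<close> by auto
    then have e: "{x, bfs_parent x} \<in> snd G" and "bfs_dist (bfs_parent x) + 1 = bfs_dist x"
      using bfs_parent by auto
    then have "even (bfs_dist x) \<longleftrightarrow> \<not> even (bfs_dist (bfs_parent x))"
      by (metis even_Suc Suc_eq_plus1)
    moreover have "x \<noteq> bfs_parent x" using simple_graph_edge_neq[OF G e] .
    ultimately show ?thesis using x(2) card_doubleton_Int_eq_1_iff[of x "bfs_parent x"] by simp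
  qed
  then show False using assms unfolding bipartite_graph_def by blast
qed

end

lemma card_vertices_le_card_edges:
  assumes "simple_graph G" and "connected_graph G" and "k \<ge> 1"
  shows "card (fst G) \<le> k * card (snd G) + 2"
    and "\<not> bipartite_graph G \<Longrightarrow> card (fst G) \<le> k * card (snd G)"
proof -
  obtain root where root: "root \<in> fst G" using assms(2) by (auto simp: connected_graph_def)
  have "card (snd G) \<le> k * card (snd G)" using assms(3) by simp
  then show "card (fst G) \<le> k * card (snd G) + 2"
    and "\<not> bipartite_graph G \<Longrightarrow> card (fst G) \<le> k * card (snd G)"
    using card_vertices_le_Suc_card_edges[OF assms(1,2) root]
      card_vertices_le_card_edges_if_not_bipartite[OF assms(1,2) root] by linarith+
qed

section \<open>Iterated subdivisions\<close>

fun depth :: "'a svert \<Rightarrow> nat" where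
  "depth (Base x) = 0"
| "depth (Mid a b i) = Suc (max (depth a) (depth b))"

text \<open>Every edge of the \<open>j\<close>-th iterated subdivision has an endpoint created in round \<open>j\<close>; this is
  what keeps the vertex names \<open>Mid a b i\<close> of the next round fresh.\<close>
definition layered :: "nat \<Rightarrow> 'a svert graph \<Rightarrow> bool" where
  "layered j H \<longleftrightarrow> (\<forall>x\<in>fst H. depth x \<le> j) \<and> (\<forall>e\<in>snd H. \<exists>x\<in>e. depth x = j)"

lemma layered_depth_Mid_ge:
  assumes "layered j (V, E)" and "{a, b} \<in> E"
  shows "depth (Mid a b i) \<ge> Suc j"
proof -
  have "\<forall>e\<in>E. \<exists>x\<in>e. depth x = j" using assms(1) unfolding layered_def by simp
  then have "\<exists>x\<in>{a, b}. depth x = j" using assms(2) by (rule bspec)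
  then show ?thesis by auto
qed

lemma layered_depth_Mid:
  assumes "layered j (V, E)" and "{a, b} \<in> E" and "a \<in> V" and "b \<in> V"
  shows "depth (Mid a b i) = Suc j"
proof -
  have "depth a \<le> j" and "depth b \<le> j" using assms(1,3,4) unfolding layered_def by auto
  with layered_depth_Mid_ge[OF assms(1,2)] show ?thesis by simp
qed

lemma layered_Mid_fresh:
  assumes "layered j (V, E)" and "{a, b} \<in> E"
  shows "Mid a b i \<notin> V"
  using layered_depth_Mid_ge[OF assms, of i] assms(1) unfolding layered_def by fastforce

context subdivision
begin

lemma layered_Sub:
  assumes "layered j (V, E)"
  shows "layered (Suc j) Sub"
  unfolding layered_def
proof (intro conjI ballI)
  fix x assume "x \<in> fst Sub"
  then have "x \<in> V \<or> x \<in> mids" by (simp add: vertices_Sub)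
  then consider "x \<in> V" | a b i where "x = Mid a b i" "{a, b} \<in> E"
    unfolding mids_iff by blast
  then show "depth x \<le> Suc j"
  proof cases
    case 1
    then show ?thesis using assms unfolding layered_def by fastforce
  next
    case 2
    then show ?thesis using layered_depth_Mid[OF assms] edge_in_V by simp
  qed
next
  fix e assume "e \<in> snd Sub"
  then obtain a b i where "{a, b} \<in> E" and "Mid a b i \<in> e"
    unfolding edges_Sub_iff by blast
  then show "\<exists>x\<in>e. depth x = Suc j" using layered_depth_Mid[OF assms] edge_in_V by blast
qed

lemma degree_pos_Sub:
  assumes "x \<in> fst Sub"
  shows "degree Sub x > 0"
proof (cases "x \<in> V")
  case True
  then show ?thesis using degree_Sub_V degree_pos k_pos by simp
next
  case False
  then show ?thesis using assms degree_Sub_mids unfolding vertices_Sub by simp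
qed

lemma bipartite_Sub:
  assumes "bipartite_graph (V, E)"
  shows "bipartite_graph Sub"
proof -
  obtain A where A: "\<And>e. e \<in> E \<Longrightarrow> card (e \<inter> A) = 1"
    using assms unfolding bipartite_graph_def by auto
  define A' where "A' = (A \<inter> V) \<union> {w \<in> mids. anchor w \<notin> A}"
  have Mid_in_A': "Mid a b i \<in> A' \<longleftrightarrow> a \<notin> A" if "{a, b} \<in> E" "i < k" for a b i
    using that Mid_fresh Mid_in_mids unfolding A'_def by auto
  have V_in_A': "a \<in> A' \<longleftrightarrow> a \<in> A" if "a \<in> V" for a
    using that mids_notin_V unfolding A'_def by auto
  have "card (e \<inter> A') = 1" if "e \<in> snd Sub" for e
  proof -
    obtain a b i where ab: "{a, b} \<in> E" "i < k"
      and e: "e = {a, Mid a b i} \<or> e = {Mid a b i, Mid b a i}"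
      using \<open>e \<in> snd Sub\<close> unfolding edges_Sub_iff by blast
    have "a \<in> V" "a \<noteq> b" using edge_in_V[OF ab(1)] edge_neq[OF ab(1)] by auto
    have "(a \<in> A) \<noteq> (b \<in> A)"
      using card_doubleton_Int_eq_1_iff[OF \<open>a \<noteq> b\<close>] A[OF ab(1)] by blast
    from e show ?thesis
    proof
      assume "e = {a, Mid a b i}"
      moreover have "a \<noteq> Mid a b i" using Mid_fresh[OF ab(1)] \<open>a \<in> V\<close> by metis
      ultimately show ?thesis
        using card_doubleton_Int_eq_1_iff[of a "Mid a b i"] V_in_A'[OF \<open>a \<in> V\<close>] Mid_in_A'[OF ab] by simp
    next
      assume "e = {Mid a b i, Mid b a i}"
      moreover have "Mid a b i \<noteq> Mid b a i" using \<open>a \<noteq> b\<close> by simp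
      ultimately show ?thesis
        using card_doubleton_Int_eq_1_iff[of "Mid a b i" "Mid b a i"] Mid_in_A'[OF ab] Mid_in_A'[OF edge_commute[OF ab(1)] ab(2)]
          \<open>(a \<in> A) \<noteq> (b \<in> A)\<close> by simp
    qed
  qed
  then show ?thesis unfolding bipartite_graph_def by blast
qed

lemma card_vertices_Sub_le:
  assumes "card V \<le> k * card E + c"
  shows "card (fst Sub) \<le> k * card (snd Sub) + c"
proof -
  have "3 * (card E * k) \<le> k * (3 * (card E * k))" using k_pos by simp
  moreover have "k * card E = card E * k" by simp
  ultimately show ?thesis using assms unfolding card_vertices_Sub card_edges_Sub by linarith
qed

lemma nlap_spec_Sub_bipartite:
  assumes "V \<noteq> {}" and "bipartite_graph (V, E)" and "card V \<le> k * card E + 2"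
  shows "nlap_spec Sub = g_all (nlap_spec (V, E) - {#0, 2#}) + {#0, 2#}
           + replicate_mset (k * card E + 2 - card V) (1/2)
           + replicate_mset (k * card E + 2 - card V) (3/2)"
proof -
  have "0 \<in># nlap_spec (V, E)"
    by (rule zero_in_nlap_spec) (use simple assms(1) degree_pos in auto)
  moreover have "2 \<in># nlap_spec (V, E)"
    by (rule two_in_nlap_spec_if_bipartite) (use simple assms(1,2) degree_pos in auto)
  ultimately have "nlap_spec Sub + repeat_mset (card V) {#1/2, 3/2#}
      = repeat_mset (k * card E) {#1/2, 3/2#} + (g_all (nlap_spec (V, E) - {#0, 2#}) + {#0, 2#})
        + replicate_mset 2 (1/2) + replicate_mset 2 (3/2)"
    using nlap_spec_Sub g_all_remove_0_2 by (simp add: mult.commute numeral_2_eq_2)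
  from cancel_repeat_mset_pair[OF this] assms(3) show ?thesis by simp
qed

lemma nlap_spec_Sub_non_bipartite:
  assumes "V \<noteq> {}" and "card V \<le> k * card E"
  shows "nlap_spec Sub = g_all (nlap_spec (V, E) - {#0#}) + {#0#}
           + replicate_mset (k * card E - card V) (1/2)
           + replicate_mset (k * card E + 2 - card V) (3/2)"
proof -
  have "0 \<in># nlap_spec (V, E)"
    by (rule zero_in_nlap_spec) (use simple assms(1) degree_pos in auto)
  then have "nlap_spec Sub + repeat_mset (card V) {#1/2, 3/2#}
      = repeat_mset (k * card E) {#1/2, 3/2#} + (g_all (nlap_spec (V, E) - {#0#}) + {#0#})
        + replicate_mset 0 (1/2) + replicate_mset 2 (3/2)"
    using nlap_spec_Sub g_all_remove_0 by (simp add: mult.commute numeral_2_eq_2)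
  from cancel_repeat_mset_pair[OF this] assms(2) show ?thesis by simp
qed

end

lemma lift_graph_simps [simp]:
  "fst (lift_graph G) = Base ` fst G" "snd (lift_graph G) = (\<lambda>e. Base ` e) ` snd G"
  by (simp_all add: lift_graph_def)

lemma inj_Base: "inj Base"
  by (rule injI) simp

lemma card_image_Base: "card (Base ` A) = card A"
  using card_image[OF inj_on_subset[OF inj_Base subset_UNIV]] .

lemma card_lift_graph:
  "card (fst (lift_graph G)) = card (fst G)" "card (snd (lift_graph G)) = card (snd G)"
proof -
  have "inj_on ((`) Base) (snd G)"
    by (rule inj_onI) (metis inj_Base inj_image_eq_iff)
  then show "card (fst (lift_graph G)) = card (fst G)" "card (snd (lift_graph G)) = card (snd G)"
    using card_image[of Base] inj_Base by (simp_all add: inj_on_def card_image)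
qed

lemma simple_graph_lift_graph:
  assumes "simple_graph G"
  shows "simple_graph (lift_graph G)"
  using assms unfolding simple_graph_def by (auto simp: card_image_Base)

lemma degree_lift_graph: "degree (lift_graph G) (Base x) = degree G x"
proof -
  have "{e' \<in> snd (lift_graph G). Base x \<in> e'} = (`) Base ` {e \<in> snd G. x \<in> e}"
    by auto
  moreover have "inj_on ((`) Base) {e \<in> snd G. x \<in> e}"
    by (rule inj_onI) (metis inj_Base inj_image_eq_iff)
  ultimately show ?thesis unfolding degree_def by (simp add: card_image)
qed

lemma bipartite_lift_graph:
  assumes "bipartite_graph G"
  shows "bipartite_graph (lift_graph G)"
proof -
  obtain A where A: "\<And>e. e \<in> snd G \<Longrightarrow> card (e \<inter> A) = 1"
    using assms unfolding bipartite_graph_def by blast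
  have "card (Base ` e \<inter> Base ` A) = 1" if "e \<in> snd G" for e
    using A[OF that] card_image[of Base "e \<inter> A"] inj_Base image_Int[OF inj_Base, of e A]
    by (simp add: inj_on_def)
  then show ?thesis unfolding bipartite_graph_def by (intro exI[of _ "Base ` A"]) auto
qed

lemma layered_lift_graph:
  assumes "simple_graph G"
  shows "layered 0 (lift_graph G)"
proof -
  have "e \<noteq> {}" if "e \<in> snd G" for e
    using assms that unfolding simple_graph_def by fastforce
  then show ?thesis unfolding layered_def by auto
qed

lemma iterated_subdivision:
  assumes G: "simple_graph G" "connected_graph G" "card (fst G) \<ge> 2" and k: "k \<ge> 1"
  shows "(S2k k ^^ j) (lift_graph G) = (V, E) \<Longrightarrow> subdivision V E k \<and> V \<noteq> {} \<and> layered j (V, E)"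
proof (induction j arbitrary: V E)
  case 0
  then have L: "lift_graph G = (V, E)" by simp
  have "degree (V, E) x > 0" if "x \<in> V" for x
    using that connected_degree_pos[OF G] degree_lift_graph[of G] L by (auto simp: prod_eq_iff)
  then have "subdivision V E k"
    using simple_graph_lift_graph[OF G(1)] layered_lift_graph[OF G(1)] layered_Mid_fresh[of 0 V E] k L
    by unfold_locales auto
  moreover have "V \<noteq> {}" using G(2) L by (auto simp: connected_graph_def prod_eq_iff)
  ultimately show ?case using layered_lift_graph[OF G(1)] L by simp
next
  case (Suc j)
  obtain V' E' where VE': "(S2k k ^^ j) (lift_graph G) = (V', E')" by fastforce
  with Suc.IH have "subdivision V' E' k" and "V' \<noteq> {}" and "layered j (V', E')" by auto
  then interpret subdivision V' E' k by simp
  have VE: "(V, E) = Sub" using Suc.prems VE' by simp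
  have layered: "layered (Suc j) (V, E)" using layered_Sub[OF \<open>layered j (V', E')\<close>] VE by simp
  have V: "V = fst Sub" and E: "E = snd Sub" using VE by (metis fst_conv, metis snd_conv)
  have "subdivision V E k"
    by unfold_locales
      (use simple_graph_Sub degree_pos_Sub layered_Mid_fresh[OF layered] k V E in auto)
  moreover have "V \<noteq> {}" using V vertices_Sub \<open>V' \<noteq> {}\<close> by simp
  ultimately show ?case using layered by simp
qed

lemma iterated_bipartite:
  assumes G: "simple_graph G" "connected_graph G" "card (fst G) \<ge> 2" and k: "k \<ge> 1"
    and "bipartite_graph G"
  shows "(S2k k ^^ j) (lift_graph G) = (V, E) \<Longrightarrow> bipartite_graph (V, E)"
proof (induction j arbitrary: V E)
  case 0
  then show ?case using bipartite_lift_graph[OF assms(5)] by simp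
next
  case (Suc j)
  obtain V' E' where VE': "(S2k k ^^ j) (lift_graph G) = (V', E')" by fastforce
  then interpret subdivision V' E' k using iterated_subdivision[OF G k] by blast
  show ?case using bipartite_Sub Suc VE' by simp
qed

lemma iterated_card_vertices_le:
  assumes G: "simple_graph G" "connected_graph G" "card (fst G) \<ge> 2" and k: "k \<ge> 1"
    and "card (fst G) \<le> k * card (snd G) + c"
  shows "(S2k k ^^ j) (lift_graph G) = (V, E) \<Longrightarrow> card V \<le> k * card E + c"
proof (induction j arbitrary: V E)
  case 0
  then show ?case using assms(5) card_lift_graph[of G] by simp
next
  case (Suc j)
  obtain V' E' where VE': "(S2k k ^^ j) (lift_graph G) = (V', E')" by fastforce
  then interpret subdivision V' E' k using iterated_subdivision[OF G k] by blast
  show ?case using card_vertices_Sub_le Suc VE' by simp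
qed

theorem theorem5p1:
  fixes G :: "'a graph" and k r :: nat
  assumes "simple_graph G" and "connected_graph G" and "card (fst G) \<ge> 2"
    and "k \<ge> 1" and "r \<ge> 1"
  defines "H \<equiv> (S2k k ^^ (r - 1)) (lift_graph G)"
  shows "(bipartite_graph G \<longrightarrow>
           nlap_spec (S2k k H) =
             g_all (nlap_spec H - {#0, 2#}) + {#0, 2#}
             + replicate_mset (k * card (snd H) + 2 - card (fst H)) (1/2)
             + replicate_mset (k * card (snd H) + 2 - card (fst H)) (3/2))
       \<and> (\<not> bipartite_graph G \<longrightarrow>
           nlap_spec (S2k k H) =
             g_all (nlap_spec H - {#0#}) + {#0#}
             + replicate_mset (k * card (snd H) - card (fst H)) (1/2)
             + replicate_mset (k * card (snd H) + 2 - card (fst H)) (3/2))"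
proof -
  obtain V E where H: "H = (V, E)" by fastforce
  then have VE: "(S2k k ^^ (r - 1)) (lift_graph G) = (V, E)" unfolding H_def .
  with iterated_subdivision[OF assms(1-4)] have "subdivision V E k" and "V \<noteq> {}" by blast+
  then interpret subdivision V E k by simp
  have "card V \<le> k * card E + 2" and "\<not> bipartite_graph G \<Longrightarrow> card V \<le> k * card E"
    using iterated_card_vertices_le[OF assms(1-4) _ VE, of 2] iterated_card_vertices_le[OF assms(1-4) _ VE, of 0]
      card_vertices_le_card_edges[OF assms(1,2,4)] by simp_all
  then show ?thesis
    using nlap_spec_Sub_bipartite[OF \<open>V \<noteq> {}\<close> iterated_bipartite[OF assms(1-4) _ VE]]
      nlap_spec_Sub_non_bipartite[OF \<open>V \<noteq> {}\<close>] H
    by auto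
qed

end
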